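(* Let $\alpha,\beta\in(0,1/2)$ and $\epsilon\in(0,1/2)$. There exists a constant $c>0$ depending only on $\alpha,\beta,\epsilon$ such that the following holds for all positive integers $n$ and $N$. Suppose there exists a test which, given two independent samples $X^1$ and $X^2$, each of $N$ i.i.d. observations from unknown distributions $p\in\Delta_n$ and $q\in\Delta_n$ on $\Omega=\{1,\dots,n\}$ respectively, outputs $H_0$ or $H_1$, such that (1) for every distribution $p$, when $q=p$ the probability of outputting $H_1$ is at most $\alpha$; and (2) for all $p,q\in\Delta_n$ with $\|p-q\|_2\ge\epsilon\|p\|_2$, the probability of outputting $H_0$ is at most $\beta$. Then $N\ge c\sqrt n$.
   Context: $\Delta_n=\{r\in\mathbb{R}^n:r\ge0,\sum_ir_i=1\}$ is the set of probability distributions on $\{1,\dots,n\}$. *)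

theory Defs
  imports Complex_Main "HOL-Library.FuncSet"
begin

definition simplex :: "nat \<Rightarrow> (nat \<Rightarrow> real) set" where
  "simplex n = {r. (\<forall>i\<in>{1..n}. 0 \<le> r i) \<and> (\<Sum>i=1..n. r i) = 1 \<and> (\<forall>i. i \<notin> {1..n} \<longrightarrow> r i = 0)}"

definition l2norm :: "nat \<Rightarrow> (nat \<Rightarrow> real) \<Rightarrow> real" where
  "l2norm n r = sqrt (\<Sum>i=1..n. (r i)^2)"

definition samples :: "nat \<Rightarrow> nat \<Rightarrow> (nat \<Rightarrow> nat) set" where
  "samples n N = ({..<N} \<rightarrow>\<^sub>E {1..n})"

definition sample_prob :: "(nat \<Rightarrow> real) \<Rightarrow> nat \<Rightarrow> (nat \<Rightarrow> nat) \<Rightarrow> real" where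
  "sample_prob p N x = (\<Prod>j<N. p (x j))"

text \<open>A test psi X1 X2 = True means output H1, False means output H0.
  Probability that the test outputs H1 (resp. H0) when X1 ~ p^N, X2 ~ q^N independent.\<close>
definition prob_H1 :: "nat \<Rightarrow> nat \<Rightarrow> (nat \<Rightarrow> real) \<Rightarrow> (nat \<Rightarrow> real) \<Rightarrow>
    ((nat \<Rightarrow> nat) \<Rightarrow> (nat \<Rightarrow> nat) \<Rightarrow> bool) \<Rightarrow> real" where
  "prob_H1 n N p q psi = (\<Sum>x1\<in>samples n N. \<Sum>x2\<in>samples n N.
      (if psi x1 x2 then sample_prob p N x1 * sample_prob q N x2 else 0))"

definition prob_H0 :: "nat \<Rightarrow> nat \<Rightarrow> (nat \<Rightarrow> real) \<Rightarrow> (nat \<Rightarrow> real) \<Rightarrow>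
    ((nat \<Rightarrow> nat) \<Rightarrow> (nat \<Rightarrow> nat) \<Rightarrow> bool) \<Rightarrow> real" where
  "prob_H0 n N p q psi = (\<Sum>x1\<in>samples n N. \<Sum>x2\<in>samples n N.
      (if psi x1 x2 then 0 else sample_prob p N x1 * sample_prob q N x2))"

end

theory Submission
  imports Defs "HOL-Analysis.Convex"
begin

(*
  Le Cam's method against Paninski's family of alternatives. Pair up the points of
  {1..n}; for each sign vector s in {-1,1}^(n div 2) let q_s move the whole mass 2/n of
  the k-th pair onto one of its two points, as chosen by s_k. Each q_s is far from the
  uniform distribution u, so with X1 ~ u^N a test with errors alpha and beta accepts
  with probability at least 1 - alpha when X2 ~ u^N and at most beta when X2 ~ W, the
  uniform mixture of the q_s^N. Hence the L1 distance between u^N and W is at least 1 - alpha - beta.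
  By Cauchy-Schwarz it is bounded by the square root of the chi-square divergence
  n^N sum W^2 - 1, and expanding W^2 turns that second moment into an average of
  (1 + 2 <s,s'> / n)^N over pairs of sign vectors, which is at most
  cosh (2N/n) ^ (n div 2) <= exp (2 N^2 / n) as long as 2N <= n. So
  2 N^2 / n >= ln (1 + (1 - alpha - beta)^2); when 2N > n the bound is trivial.
*)

lemma cosh_le_exp_square:
  fixes x :: real
  assumes "0 \<le> x" "x \<le> 1"
  shows "cosh x \<le> exp (x\<^sup>2)"
proof -
  have "exp (- x) = 1 / exp x"
    by (simp add: exp_minus field_simps)
  also have "\<dots> \<le> 1 / (1 + x)"
    using assms by (intro divide_left_mono exp_ge_add_one_self) auto
  also have "\<dots> \<le> 1 - x + x\<^sup>2"
    using assms by (simp add: field_simps power2_eq_square)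
  finally have "cosh x \<le> 1 + x\<^sup>2"
    using exp_bound[OF assms] by (simp add: cosh_def)
  also have "\<dots> \<le> exp (x\<^sup>2)"
    by (rule exp_ge_add_one_self)
  finally show ?thesis .
qed

lemma sum_abs_diff_uniform_le_chi_square:
  fixes W :: "'a \<Rightarrow> real"
  assumes "finite S" "sum W S = 1"
  shows "(\<Sum>x\<in>S. \<bar>1 / card S - W x\<bar>)\<^sup>2 \<le> card S * (\<Sum>x\<in>S. (W x)\<^sup>2) - 1"
proof -
  have "S \<noteq> {}"
    using assms(2) by auto
  then have card_pos: "0 < real (card S)"
    using assms(1) by (simp add: card_gt_0_iff)
  have "(\<Sum>x\<in>S. \<bar>1 / card S - W x\<bar>)\<^sup>2 \<le> (\<Sum>x\<in>S. \<bar>1 / card S - W x\<bar>\<^sup>2) * card S"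
    by (rule sum_squared_le_sum_of_squares)
  also have "(\<Sum>x\<in>S. \<bar>1 / card S - W x\<bar>\<^sup>2)
      = card S * (1 / card S)\<^sup>2 - 2 / card S * sum W S + (\<Sum>x\<in>S. (W x)\<^sup>2)"
    by (simp add: power2_eq_square algebra_simps sum.distrib sum_subtractf sum_distrib_left
          sum_divide_distrib sum_distrib_right)
  finally show ?thesis
    using card_pos assms(2) by (simp add: power2_eq_square algebra_simps)
qed

lemma sum_atLeastAtMost_in_pairs:
  fixes g :: "nat \<Rightarrow> 'a::comm_monoid_add"
  shows "(\<Sum>i=1..2*K. g i) = (\<Sum>k<K. g (2*k+1) + g (2*k+2))"
proof (induction K)
  case (Suc K)
  have "{1..2 * Suc K} = insert (2*K+2) (insert (2*K+1) {1..2*K})"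
    by auto
  then show ?case
    using Suc by (simp add: ac_simps)
qed simp

lemma finite_samples [simp]: "finite (samples n N)"
  by (simp add: samples_def finite_PiE)

lemma card_samples: "card (samples n N) = n ^ N"
  by (simp add: samples_def card_PiE)

lemma sum_samples_prod:
  "(\<Sum>x\<in>samples n N. \<Prod>j<N. g (x j)) = (\<Sum>i=1..n. g i :: real) ^ N"
proof -
  have "(\<Prod>j<N. \<Sum>i=1..n. g i) = (\<Sum>x\<in>{..<N} \<rightarrow>\<^sub>E {1..n}. \<Prod>j<N. g (x j))"
    by (rule prod_sum_PiE) auto
  then show ?thesis
    by (simp add: samples_def)
qed

lemma sum_sample_prob_mult:
  "(\<Sum>x\<in>samples n N. sample_prob p N x * sample_prob q N x) = (\<Sum>i=1..n. p i * q i) ^ N"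
  unfolding sample_prob_def prod.distrib[symmetric] by (rule sum_samples_prod)

lemma sum_sample_prob: "p \<in> simplex n \<Longrightarrow> (\<Sum>x\<in>samples n N. sample_prob p N x) = 1"
  unfolding sample_prob_def sum_samples_prod by (simp add: simplex_def)

lemma sample_prob_nonneg: "p \<in> simplex n \<Longrightarrow> x \<in> samples n N \<Longrightarrow> 0 \<le> sample_prob p N x"
  by (auto simp: sample_prob_def simplex_def samples_def PiE_def intro!: prod_nonneg)

definition accept_prob :: "nat \<Rightarrow> nat \<Rightarrow> (nat \<Rightarrow> real) \<Rightarrow>
    ((nat \<Rightarrow> nat) \<Rightarrow> (nat \<Rightarrow> nat) \<Rightarrow> bool) \<Rightarrow> (nat \<Rightarrow> nat) \<Rightarrow> real" where
  "accept_prob n N p psi x2 = (\<Sum>x1\<in>samples n N. if psi x1 x2 then 0 else sample_prob p N x1)"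

lemma prob_H0_eq_sum_accept_prob:
  "prob_H0 n N p q psi = (\<Sum>x2\<in>samples n N. accept_prob n N p psi x2 * sample_prob q N x2)"
  unfolding prob_H0_def accept_prob_def sum_distrib_right
  by (subst sum.swap) (auto intro!: sum.cong)

lemma accept_prob_bounds:
  assumes "p \<in> simplex n"
  shows "0 \<le> accept_prob n N p psi x2" "accept_prob n N p psi x2 \<le> 1"
proof -
  show "0 \<le> accept_prob n N p psi x2"
    unfolding accept_prob_def using sample_prob_nonneg[OF assms] by (intro sum_nonneg) auto
  have "accept_prob n N p psi x2 \<le> (\<Sum>x1\<in>samples n N. sample_prob p N x1)"
    unfolding accept_prob_def using sample_prob_nonneg[OF assms] by (intro sum_mono) auto
  then show "accept_prob n N p psi x2 \<le> 1"
    using sum_sample_prob[OF assms] by simp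
qed

lemma prob_H0_add_prob_H1:
  assumes "p \<in> simplex n" "q \<in> simplex n"
  shows "prob_H0 n N p q psi + prob_H1 n N p q psi = 1"
proof -
  have "prob_H0 n N p q psi + prob_H1 n N p q psi
      = (\<Sum>x1\<in>samples n N. \<Sum>x2\<in>samples n N. sample_prob p N x1 * sample_prob q N x2)"
    unfolding prob_H0_def prob_H1_def by (auto simp flip: sum.distrib intro!: sum.cong)
  also have "\<dots> = 1"
    using assms by (simp add: sum_sample_prob flip: sum_product)
  finally show ?thesis .
qed

definition uniform :: "nat \<Rightarrow> nat \<Rightarrow> real" where
  "uniform n i = (if i \<in> {1..n} then 1 / n else 0)"

lemma uniform_in_simplex: "1 \<le> n \<Longrightarrow> uniform n \<in> simplex n"
  by (auto simp: simplex_def uniform_def)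

lemma sample_prob_uniform:
  assumes "x \<in> samples n N"
  shows "sample_prob (uniform n) N x = 1 / card (samples n N)"
proof -
  have "x j \<in> {1..n}" if "j < N" for j
    using assms that PiE_mem[of x "{..<N}" "\<lambda>_. {1..n}" j] by (simp add: samples_def)
  then have "sample_prob (uniform n) N x = (\<Prod>j<N. 1 / real n)"
    unfolding sample_prob_def uniform_def by simp
  then show ?thesis
    by (simp add: card_samples power_one_over)
qed

definition sign_vectors :: "nat \<Rightarrow> (nat \<Rightarrow> real) set" where
  "sign_vectors K = {..<K} \<rightarrow>\<^sub>E {-1, 1}"

lemma card_sign_vectors: "card (sign_vectors K) = 2 ^ K"
  by (simp add: sign_vectors_def card_PiE eval_nat_numeral)

lemma sign_vectors_cases: "s \<in> sign_vectors K \<Longrightarrow> k < K \<Longrightarrow> s k = 1 \<or> s k = -1"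
  by (auto simp: sign_vectors_def PiE_def Pi_def)

lemma sum_exp_inner_sign_vectors:
  assumes "s \<in> sign_vectors K"
  shows "(\<Sum>s'\<in>sign_vectors K. exp (b * (\<Sum>k<K. s k * s' k))) = (2 * cosh b) ^ K"
proof -
  have "(\<Sum>s'\<in>sign_vectors K. exp (b * (\<Sum>k<K. s k * s' k)))
      = (\<Sum>s'\<in>sign_vectors K. \<Prod>k<K. exp (b * s k * s' k))"
    by (simp add: sum_distrib_left exp_sum mult.assoc)
  also have "\<dots> = (\<Prod>k<K. \<Sum>v\<in>{-1, 1}. exp (b * s k * v))"
    unfolding sign_vectors_def by (rule prod_sum_PiE[symmetric]) auto
  also have "\<dots> = (\<Prod>k<K. 2 * cosh b)"
  proof (rule prod.cong)
    fix k assume "k \<in> {..<K}"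
    then have "s k = 1 \<or> s k = -1"
      using sign_vectors_cases[OF assms] by simp
    then show "(\<Sum>v\<in>{-1, 1}. exp (b * s k * v)) = 2 * cosh b"
      by (elim disjE) (simp_all add: cosh_def)
  qed simp
  finally show ?thesis
    by simp
qed

definition pair_signs :: "nat \<Rightarrow> (nat \<Rightarrow> real) \<Rightarrow> nat \<Rightarrow> real" where
  "pair_signs K s i = (if i \<in> {1..2*K} then (if odd i then 1 else -1) * s ((i - 1) div 2) else 0)"

lemma pair_signs_odd [simp]: "k < K \<Longrightarrow> pair_signs K s (Suc (2*k)) = s k"
  by (simp add: pair_signs_def)

lemma pair_signs_even [simp]: "k < K \<Longrightarrow> pair_signs K s (Suc (Suc (2*k))) = - s k"
  by (simp add: pair_signs_def)

lemma sum_pair_signs_eq_in_pairs: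
  fixes f :: "real \<Rightarrow> real \<Rightarrow> real"
  assumes "2*K \<le> n"
  shows "(\<Sum>i=1..n. f (pair_signs K s i) (pair_signs K s' i))
       = (\<Sum>k<K. f (s k) (s' k) + f (- s k) (- s' k)) + (n - 2*K) * f 0 0"
proof -
  have "{1..n} = {1..2*K} \<union> {2*K+1..n}" "{1..2*K} \<inter> {2*K+1..n} = {}"
    using assms by auto
  then have "(\<Sum>i=1..n. f (pair_signs K s i) (pair_signs K s' i))
      = (\<Sum>i=1..2*K. f (pair_signs K s i) (pair_signs K s' i)) + (\<Sum>i=2*K+1..n. f 0 0)"
    by (simp add: sum.union_disjoint pair_signs_def)
  also have "(\<Sum>i=1..2*K. f (pair_signs K s i) (pair_signs K s' i))
      = (\<Sum>k<K. f (s k) (s' k) + f (- s k) (- s' k))"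
    unfolding sum_atLeastAtMost_in_pairs by simp
  finally show ?thesis
    using assms by (simp add: of_nat_diff)
qed

(* Index i = 2k+1 gets mass (1 + s k)/n and i = 2k+2 gets (1 - s k)/n; for odd n the
   unpaired point n keeps mass 1/n. *)
definition paninski :: "nat \<Rightarrow> (nat \<Rightarrow> real) \<Rightarrow> nat \<Rightarrow> real" where
  "paninski n s i = (if i \<in> {1..n} then (1 + pair_signs (n div 2) s i) / n else 0)"

lemma paninski_nonneg:
  assumes "s \<in> sign_vectors (n div 2)"
  shows "0 \<le> paninski n s i"
proof (cases "i \<in> {1..2 * (n div 2)}")
  case True
  then have "(i - 1) div 2 < n div 2"
    by auto
  then have "s ((i - 1) div 2) = 1 \<or> s ((i - 1) div 2) = -1"
    by (rule sign_vectors_cases[OF assms])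
  then have "-1 \<le> pair_signs (n div 2) s i"
    by (auto simp: pair_signs_def)
  then show ?thesis
    by (simp add: paninski_def)
qed (simp add: paninski_def pair_signs_def)

lemma paninski_in_simplex:
  assumes "1 \<le> n" "s \<in> sign_vectors (n div 2)"
  shows "paninski n s \<in> simplex n"
proof -
  let ?K = "n div 2"
  have "(\<Sum>i=1..n. paninski n s i) = (\<Sum>i=1..n. (1 + pair_signs ?K s i) / n)"
    by (simp add: paninski_def)
  also have "\<dots> = 1"
    using sum_pair_signs_eq_in_pairs[of ?K n "\<lambda>a b. (1 + a) / real n" s s] assms(1)
    by (simp add: field_simps)
  moreover have "\<forall>i. i \<notin> {1..n} \<longrightarrow> paninski n s i = 0"
    by (simp add: paninski_def)
  ultimately show ?thesis
    using paninski_nonneg[OF assms(2)] by (simp add: simplex_def)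
qed

lemma paninski_inner:
  assumes "1 \<le> n"
  shows "real n * (\<Sum>i=1..n. paninski n s i * paninski n s' i) = 1 + 2 / n * (\<Sum>k<n div 2. s k * s' k)"
proof -
  let ?K = "n div 2"
  have "(\<Sum>i=1..n. paninski n s i * paninski n s' i)
      = (\<Sum>i=1..n. (1 + pair_signs ?K s i) * (1 + pair_signs ?K s' i) / (real n)\<^sup>2)"
    by (simp add: paninski_def power2_eq_square)
  also have "\<dots> = (\<Sum>k<?K. (1 + s k) * (1 + s' k) / (real n)\<^sup>2 + (1 - s k) * (1 - s' k) / (real n)\<^sup>2)
      + real (n - 2 * ?K) / (real n)\<^sup>2"
    by (subst sum_pair_signs_eq_in_pairs[where f = "\<lambda>a b. (1 + a) * (1 + b) / (real n)\<^sup>2"]) simp_all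
  also have "\<dots> = (\<Sum>k<?K. 2 / (real n)\<^sup>2 + 2 * (s k * s' k) / (real n)\<^sup>2) + real (n - 2 * ?K) / (real n)\<^sup>2"
    by (simp add: add_divide_distrib[symmetric] algebra_simps)
  also have "\<dots> = (real n + 2 * (\<Sum>k<?K. s k * s' k)) / (real n)\<^sup>2"
    by (simp add: sum.distrib sum_distrib_left add_divide_distrib of_nat_diff
          flip: sum_divide_distrib) (simp flip: add_divide_distrib)
  finally show ?thesis
    using assms by (simp add: field_simps power2_eq_square)
qed

lemma sum_square_uniform_minus_paninski:
  assumes "s \<in> sign_vectors (n div 2)"
  shows "(\<Sum>i=1..n. (uniform n i - paninski n s i)\<^sup>2) = 2 * real (n div 2) / (real n)\<^sup>2"
proof -
  let ?K = "n div 2"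
  have "(\<Sum>i=1..n. (uniform n i - paninski n s i)\<^sup>2)
      = (\<Sum>i=1..n. pair_signs ?K s i * pair_signs ?K s i / (real n)\<^sup>2)"
    by (intro sum.cong) (auto simp: uniform_def paninski_def field_simps power2_eq_square)
  also have "\<dots> = (\<Sum>k<?K. s k * s k / (real n)\<^sup>2 + (- s k) * (- s k) / (real n)\<^sup>2)"
    by (subst sum_pair_signs_eq_in_pairs[where f = "\<lambda>a b. a * b / (real n)\<^sup>2"]) simp_all
  also have "\<dots> = (\<Sum>k<?K. 2 / (real n)\<^sup>2)"
  proof (intro sum.cong refl)
    fix k assume "k \<in> {..<?K}"
    then have "s k * s k = 1"
      using sign_vectors_cases[OF assms] by fastforce
    then show "s k * s k / (real n)\<^sup>2 + (- s k) * (- s k) / (real n)\<^sup>2 = 2 / (real n)\<^sup>2"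
      by (simp flip: add_divide_distrib)
  qed
  also have "\<dots> = 2 * real ?K / (real n)\<^sup>2"
    by simp
  finally show ?thesis .
qed

lemma paninski_far_from_uniform:
  assumes "2 \<le> n" "0 \<le> \<epsilon>" "\<epsilon> \<le> 1/2" "s \<in> sign_vectors (n div 2)"
  shows "\<epsilon> * l2norm n (uniform n) \<le> l2norm n (\<lambda>i. uniform n i - paninski n s i)"
proof -
  let ?K = "n div 2"
  have "(\<Sum>i=1..n. (uniform n i)\<^sup>2) = 1 / n"
    using assms(1) by (simp add: uniform_def power2_eq_square)
  then have "(\<epsilon> * l2norm n (uniform n))\<^sup>2 = \<epsilon>\<^sup>2 / n"
    by (simp add: l2norm_def power_mult_distrib)
  also have "\<dots> \<le> 2 * ?K / n\<^sup>2"
  proof -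
    have "\<epsilon>\<^sup>2 \<le> (1/2)\<^sup>2"
      using assms(3,2) by (rule power_mono)
    then have "\<epsilon>\<^sup>2 * n \<le> n / 4"
      using mult_right_mono[of "\<epsilon>\<^sup>2" "1/4" "real n"] by (simp add: power_divide)
    moreover have "real n \<le> real (2 * ?K + 1)"
      by (simp only: of_nat_le_iff)
    moreover have "2 \<le> real n"
      using assms(1) by simp
    ultimately have "\<epsilon>\<^sup>2 * n \<le> 2 * ?K"
      by linarith
    then show ?thesis
      using assms(1) by (simp add: field_simps power2_eq_square)
  qed
  finally show ?thesis
    unfolding l2norm_def sum_square_uniform_minus_paninski[OF assms(4)] by (intro real_le_rsqrt) simp
qed

definition paninski_mixture :: "nat \<Rightarrow> nat \<Rightarrow> (nat \<Rightarrow> nat) \<Rightarrow> real" where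
  "paninski_mixture n N x =
     (\<Sum>s\<in>sign_vectors (n div 2). sample_prob (paninski n s) N x) / 2 ^ (n div 2)"

lemma sum_paninski_mixture:
  assumes "1 \<le> n"
  shows "(\<Sum>x\<in>samples n N. paninski_mixture n N x) = 1"
proof -
  have "(\<Sum>x\<in>samples n N. paninski_mixture n N x)
      = (\<Sum>s\<in>sign_vectors (n div 2). \<Sum>x\<in>samples n N. sample_prob (paninski n s) N x) / 2 ^ (n div 2)"
    unfolding paninski_mixture_def sum_divide_distrib[symmetric] by (rule arg_cong2[OF sum.swap refl])
  also have "\<dots> = 1"
    using assms by (simp add: sum_sample_prob paninski_in_simplex card_sign_vectors)
  finally show ?thesis .
qed

lemma sample_inner_paninski_le_exp:
  assumes "1 \<le> n" "s \<in> sign_vectors (n div 2)" "s' \<in> sign_vectors (n div 2)"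
  shows "real n ^ N * (\<Sum>x\<in>samples n N. sample_prob (paninski n s) N x * sample_prob (paninski n s') N x)
     \<le> exp (2 * real N / n * (\<Sum>k<n div 2. s k * s' k))"
proof -
  let ?Z = "\<Sum>k<n div 2. s k * s' k"
  have "real n ^ N * (\<Sum>x\<in>samples n N. sample_prob (paninski n s) N x * sample_prob (paninski n s') N x)
      = (real n * (\<Sum>i=1..n. paninski n s i * paninski n s' i)) ^ N"
    by (simp add: sum_sample_prob_mult power_mult_distrib)
  also have "\<dots> = (1 + 2 / n * ?Z) ^ N"
    using paninski_inner[OF assms(1)] by simp
  also have "\<dots> \<le> exp (2 / n * ?Z) ^ N"
  proof (rule power_mono)
    have "0 \<le> real n * (\<Sum>i=1..n. paninski n s i * paninski n s' i)"
      using paninski_nonneg assms(2,3) by (simp add: sum_nonneg)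
    then show "0 \<le> 1 + 2 / n * ?Z"
      using paninski_inner[OF assms(1)] by simp
  qed (rule exp_ge_add_one_self)
  also have "\<dots> = exp (2 * real N / n * ?Z)"
    by (simp add: algebra_simps flip: exp_of_nat_mult)
  finally show ?thesis .
qed

lemma paninski_mixture_chi_square_le:
  assumes "1 \<le> n" "2 * N \<le> n"
  shows "real n ^ N * (\<Sum>x\<in>samples n N. (paninski_mixture n N x)\<^sup>2) \<le> exp (2 * (real N)\<^sup>2 / n)"
proof -
  let ?K = "n div 2" and ?S = "sign_vectors (n div 2)"
  define b where "b = 2 * real N / n"
  have b: "0 \<le> b" "b \<le> 1"
    using assms by (auto simp: b_def field_simps)
  let ?Q = "\<lambda>s x. sample_prob (paninski n s) N x"
  have "(\<Sum>x\<in>samples n N. (paninski_mixture n N x)\<^sup>2)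
      = (\<Sum>x\<in>samples n N. \<Sum>s\<in>?S. \<Sum>s'\<in>?S. ?Q s x * ?Q s' x) / (2 ^ ?K)\<^sup>2"
    by (simp add: paninski_mixture_def power_divide power2_eq_square sum_product sum_divide_distrib)
  also have "\<dots> = (\<Sum>s\<in>?S. \<Sum>s'\<in>?S. \<Sum>x\<in>samples n N. ?Q s x * ?Q s' x) / (2 ^ ?K)\<^sup>2"
    by (subst sum.swap) (simp only: sum.swap[of _ "samples n N"])
  finally have "real n ^ N * (\<Sum>x\<in>samples n N. (paninski_mixture n N x)\<^sup>2)
      = (\<Sum>s\<in>?S. \<Sum>s'\<in>?S. real n ^ N * (\<Sum>x\<in>samples n N. ?Q s x * ?Q s' x)) / (2 ^ ?K)\<^sup>2"
    by (simp add: sum_distrib_left)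
  also have "\<dots> \<le> (\<Sum>s\<in>?S. \<Sum>s'\<in>?S. exp (b * (\<Sum>k<?K. s k * s' k))) / (2 ^ ?K)\<^sup>2"
    unfolding b_def
    by (intro divide_right_mono sum_mono sample_inner_paninski_le_exp[OF assms(1)]) simp_all
  also have "\<dots> = (\<Sum>s\<in>?S. (2 * cosh b) ^ ?K) / (2 ^ ?K)\<^sup>2"
    by (simp add: sum_exp_inner_sign_vectors)
  also have "\<dots> = cosh b ^ ?K"
    by (simp add: card_sign_vectors power_mult_distrib power2_eq_square)
  also have "\<dots> \<le> exp (b\<^sup>2) ^ ?K"
    using b by (intro power_mono cosh_le_exp_square) auto
  also have "\<dots> = exp (?K * b\<^sup>2)"
    by (simp flip: exp_of_nat_mult)
  also have "\<dots> \<le> exp (2 * (real N)\<^sup>2 / n)"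
  proof -
    have "real ?K * b\<^sup>2 \<le> n / 2 * b\<^sup>2"
      by (intro mult_right_mono zero_le_power2) linarith
    also have "\<dots> = 2 * (real N)\<^sup>2 / n"
      using assms(1) by (simp add: b_def power2_eq_square field_simps)
    finally show ?thesis
      by simp
  qed
  finally show ?thesis .
qed

lemma paninski_testing_bound:
  assumes "1 \<le> n" "2 * N \<le> n"
    and null: "prob_H1 n N (uniform n) (uniform n) psi \<le> \<alpha>"
    and alt: "\<And>s. s \<in> sign_vectors (n div 2) \<Longrightarrow> prob_H0 n N (uniform n) (paninski n s) psi \<le> \<beta>"
  shows "1 - \<alpha> - \<beta> \<le> sqrt (exp (2 * (real N)\<^sup>2 / n) - 1)"
proof -
  let ?X = "samples n N" and ?S = "sign_vectors (n div 2)"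
  let ?A = "accept_prob n N (uniform n) psi" and ?P = "sample_prob (uniform n) N"
    and ?W = "paninski_mixture n N"
  have u: "uniform n \<in> simplex n"
    using assms(1) by (rule uniform_in_simplex)
  have "1 - \<alpha> \<le> prob_H0 n N (uniform n) (uniform n) psi"
    using prob_H0_add_prob_H1[OF u u, of N psi] null by linarith
  also have "\<dots> = (\<Sum>x\<in>?X. ?A x * ?P x)"
    by (rule prob_H0_eq_sum_accept_prob)
  finally have accept_null: "1 - \<alpha> \<le> (\<Sum>x\<in>?X. ?A x * ?P x)" .
  have "(\<Sum>x\<in>?X. ?A x * ?W x)
      = (\<Sum>s\<in>?S. prob_H0 n N (uniform n) (paninski n s) psi) / 2 ^ (n div 2)"
    unfolding paninski_mixture_def prob_H0_eq_sum_accept_prob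
    by (simp add: sum_distrib_left sum_divide_distrib sum.swap[of _ ?X])
  also have "\<dots> \<le> (\<Sum>s\<in>?S. \<beta>) / 2 ^ (n div 2)"
    using alt by (intro divide_right_mono sum_mono) auto
  also have "\<dots> = \<beta>"
    by (simp add: card_sign_vectors)
  finally have accept_alt: "(\<Sum>x\<in>?X. ?A x * ?W x) \<le> \<beta>" .
  have "1 - \<alpha> - \<beta> \<le> (\<Sum>x\<in>?X. ?A x * (?P x - ?W x))"
    using accept_null accept_alt by (simp add: right_diff_distrib sum_subtractf)
  also have "\<dots> \<le> (\<Sum>x\<in>?X. \<bar>1 / card ?X - ?W x\<bar>)"
  proof (rule sum_mono)
    fix x assume "x \<in> ?X"
    then have "?A x * (?P x - ?W x) = ?A x * (1 / card ?X - ?W x)"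
      by (simp add: sample_prob_uniform)
    also have "\<dots> \<le> ?A x * \<bar>1 / card ?X - ?W x\<bar>"
      using accept_prob_bounds(1)[OF u] by (intro mult_left_mono) auto
    also have "\<dots> \<le> \<bar>1 / card ?X - ?W x\<bar>"
      using accept_prob_bounds[OF u] by (intro mult_left_le_one_le) auto
    finally show "?A x * (?P x - ?W x) \<le> \<bar>1 / card ?X - ?W x\<bar>" .
  qed
  also have "\<dots> \<le> sqrt (card ?X * (\<Sum>x\<in>?X. (?W x)\<^sup>2) - 1)"
    using sum_abs_diff_uniform_le_chi_square[OF finite_samples sum_paninski_mixture[OF assms(1)]]
    by (rule real_le_rsqrt)
  also have "\<dots> \<le> sqrt (exp (2 * (real N)\<^sup>2 / n) - 1)"
    using paninski_mixture_chi_square_le[OF assms(1,2)] by (simp add: card_samples)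
  finally show ?thesis .
qed

lemma sample_size_from_error_bound:
  fixes g :: real and n N :: nat
  assumes "0 < g" "1 \<le> n"
    and bound: "2 * N \<le> n \<Longrightarrow> g \<le> sqrt (exp (2 * (real N)\<^sup>2 / n) - 1)"
  shows "min (1/2) (sqrt (ln (1 + g\<^sup>2) / 2)) * sqrt n \<le> N"
proof (cases "2 * N \<le> n")
  case True
  have "g\<^sup>2 \<le> exp (2 * (real N)\<^sup>2 / n) - 1"
    using assms(1) bound[OF True] by (intro sqrt_ge_absD) simp
  then have "ln (1 + g\<^sup>2) \<le> 2 * (real N)\<^sup>2 / n"
    by (subst exp_le_cancel_iff[symmetric]) (simp add: add_pos_nonneg)
  then have "ln (1 + g\<^sup>2) / 2 * n \<le> (real N)\<^sup>2"
    using assms(2) by (simp add: field_simps)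
  then have "sqrt (ln (1 + g\<^sup>2) / 2) * sqrt n \<le> N"
    by (simp add: real_le_lsqrt flip: real_sqrt_mult)
  moreover have "min (1/2) (sqrt (ln (1 + g\<^sup>2) / 2)) * sqrt n \<le> sqrt (ln (1 + g\<^sup>2) / 2) * sqrt n"
    by (intro mult_right_mono) simp_all
  ultimately show ?thesis
    by linarith
next
  case False
  have "sqrt n \<le> n"
    using assms(2) by (intro real_le_lsqrt) (auto simp: power2_eq_square)
  then have "min (1/2) (sqrt (ln (1 + g\<^sup>2) / 2)) * sqrt n \<le> n / 2"
    using mult_mono[of "min (1/2) (sqrt (ln (1 + g\<^sup>2) / 2))" "1/2" "sqrt n" n] by simp
  then show ?thesis
    using False by linarith
qed

theorem proposition3:
  fixes \<alpha> \<beta> \<epsilon> :: real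
  assumes "0 < \<alpha>" "\<alpha> < 1/2" "0 < \<beta>" "\<beta> < 1/2" "0 < \<epsilon>" "\<epsilon> < 1/2"
  shows "\<exists>c>0. \<forall>n N :: nat. \<forall>psi :: (nat \<Rightarrow> nat) \<Rightarrow> (nat \<Rightarrow> nat) \<Rightarrow> bool.
           1 \<le> n \<longrightarrow> 1 \<le> N \<longrightarrow>
           (\<forall>p\<in>simplex n. prob_H1 n N p p psi \<le> \<alpha>) \<longrightarrow>
           (\<forall>p\<in>simplex n. \<forall>q\<in>simplex n.
              l2norm n (\<lambda>i. p i - q i) \<ge> \<epsilon> * l2norm n p \<longrightarrow> prob_H0 n N p q psi \<le> \<beta>) \<longrightarrow>
           real N \<ge> c * sqrt (real n)"
proof -
  define g where "g = 1 - \<alpha> - \<beta>"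
  have "0 < g"
    using assms by (simp add: g_def)
  then have "0 < ln (1 + g\<^sup>2)"
    by (intro ln_gt_zero) simp
  show ?thesis
  proof (intro exI[of _ "min (1/2) (sqrt (ln (1 + g\<^sup>2) / 2))"] conjI allI impI)
    fix n N :: nat and psi :: "(nat \<Rightarrow> nat) \<Rightarrow> (nat \<Rightarrow> nat) \<Rightarrow> bool"
    assume n: "1 \<le> n" and N: "1 \<le> N"
      and null: "\<forall>p\<in>simplex n. prob_H1 n N p p psi \<le> \<alpha>"
      and alt: "\<forall>p\<in>simplex n. \<forall>q\<in>simplex n.
              l2norm n (\<lambda>i. p i - q i) \<ge> \<epsilon> * l2norm n p \<longrightarrow> prob_H0 n N p q psi \<le> \<beta>"
    have bound: "g \<le> sqrt (exp (2 * (real N)\<^sup>2 / n) - 1)" if "2 * N \<le> n"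
    proof -
      have "2 \<le> n"
        using N that by linarith
      then show ?thesis
        unfolding g_def using n that null uniform_in_simplex[OF n]
        by (intro paninski_testing_bound)
          (use alt assms(5,6) paninski_in_simplex paninski_far_from_uniform in auto)
    qed
    show "min (1/2) (sqrt (ln (1 + g\<^sup>2) / 2)) * sqrt n \<le> N"
      by (rule sample_size_from_error_bound[OF \<open>0 < g\<close> n bound])
  qed (use \<open>0 < ln (1 + g\<^sup>2)\<close> in simp)
qed

end
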